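(* Let $\kappa$ be a weakly compact cardinal and let $A\subseteq\kappa$ be a non-stationary set of regular cardinals which is unbounded in $\kappa$. Then $\kappa\notin\operatorname{spec}(A)$. Therefore, if $\kappa$ is weakly compact and $A\subseteq\kappa$ is an unbounded set of regular cardinals, then $\kappa\in\operatorname{spec}(A)$ if and only if $A$ is stationary in $\kappa$.
   Context: For a set $A$ of regular cardinals, $\prod A$ is the set of functions $f$ with domain $A$ and $f(a)\in a$, ordered by pointwise domination. $\operatorname{spec}(A)$ is the set of regular cardinals $\lambda$ with $(\prod A,<)\geq_T\lambda$ in the Tukey order; equivalently, regular $\lambda$ such that there exists $\mathcal{F}\subseteq\prod A$ of size $\lambda$ such that every $\lambda$-sized subset of $\mathcal{F}$ is unbounded in $(\prod A,<)$. *)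

theory Defs
  imports Main "HOL-Library.Equipollence" "HOL-Library.FuncSet"
begin

text \<open>Ordinals are modelled as elements of a well-ordered type 'o; the ordinal
  alpha is identified with its initial segment {..<alpha}, so "beta in alpha"
  means beta < alpha.\<close>

definition is_cardinal :: "'o::wellorder \<Rightarrow> bool" where
  "is_cardinal l \<longleftrightarrow> (\<forall>\<beta><l. \<not> ({..<\<beta>} \<approx> {..<l}))"

definition unbounded_in :: "'o::wellorder set \<Rightarrow> 'o \<Rightarrow> bool" where
  "unbounded_in X l \<longleftrightarrow> (\<forall>\<gamma><l. \<exists>x\<in>X. \<gamma> \<le> x)"

definition regular_cardinal :: "'o::wellorder \<Rightarrow> bool" where
  "regular_cardinal l \<longleftrightarrow> is_cardinal l \<and> infinite {..<l} \<and>
     (\<forall>X\<subseteq>{..<l}. unbounded_in X l \<longrightarrow> X \<approx> {..<l})"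

definition club :: "'o::wellorder set \<Rightarrow> 'o \<Rightarrow> bool" where
  "club C \<kappa> \<longleftrightarrow> C \<subseteq> {..<\<kappa>} \<and> unbounded_in C \<kappa> \<and>
     (\<forall>\<beta><\<kappa>. (\<exists>c\<in>C. c < \<beta>) \<and> (\<forall>\<gamma><\<beta>. \<exists>c\<in>C. \<gamma> < c \<and> c < \<beta>) \<longrightarrow> \<beta> \<in> C)"

definition stationary :: "'o::wellorder set \<Rightarrow> 'o \<Rightarrow> bool" where
  "stationary S \<kappa> \<longleftrightarrow> S \<subseteq> {..<\<kappa>} \<and> (\<forall>C. club C \<kappa> \<longrightarrow> S \<inter> C \<noteq> {})"

text \<open>Weakly compact: uncountable cardinal kappa with kappa \<rightarrow> (kappa)^2_2.\<close>
definition weakly_compact :: "'o::wellorder \<Rightarrow> bool" where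
  "weakly_compact \<kappa> \<longleftrightarrow> is_cardinal \<kappa> \<and> uncountable {..<\<kappa>} \<and>
     (\<forall>c :: 'o \<Rightarrow> 'o \<Rightarrow> bool. \<exists>H\<subseteq>{..<\<kappa>}. \<exists>i. H \<approx> {..<\<kappa>} \<and>
        (\<forall>x\<in>H. \<forall>y\<in>H. x < y \<longrightarrow> c x y = i))"

definition prodA :: "'o::wellorder set \<Rightarrow> ('o \<Rightarrow> 'o) set" where
  "prodA A = (\<Pi>\<^sub>E a\<in>A. {..<a})"

definition bounded_prod :: "'o::wellorder set \<Rightarrow> ('o \<Rightarrow> 'o) set \<Rightarrow> bool" where
  "bounded_prod A G \<longleftrightarrow> (\<exists>g\<in>prodA A. \<forall>f\<in>G. \<forall>a\<in>A. f a < g a)"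

definition in_spec :: "'o::wellorder set \<Rightarrow> 'o \<Rightarrow> bool" where
  "in_spec A l \<longleftrightarrow> regular_cardinal l \<and>
     (\<exists>F\<subseteq>prodA A. F \<approx> {..<l} \<and>
        (\<forall>G\<subseteq>F. G \<approx> {..<l} \<longrightarrow> \<not> bounded_prod A G))"

end

theory Submission
  imports Defs
begin

text \<open>
  Let F be a subset of prod A of size kappa, enumerated as f_i (i < kappa). Colour a pair
  i < j by whether f_i precedes f_j lexicographically. On a homogeneous set H of size kappa
  every coordinate a in A is monotone along H once the coordinates below a have settled,
  and so, taking fewer than kappa values, is eventually constant; this settles all
  coordinates by induction on a. If A misses a club C, pick for each c in C an index of H
  above c past which all coordinates below c have settled. At a coordinate a in A the
  indices picked for c > a give the settled value, while those picked for c < a come from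
  the part of C below a, which is bounded in a since a is regular and not in C; so these
  kappa functions are bounded.

  Conversely, let f_alpha be alpha at every coordinate above alpha. For kappa many alpha,
  the limit points of the chosen alpha form a club; if A is stationary it contains such a
  limit point a, and at a the values f_alpha(a) = alpha exceed any bound g(a) < a.
\<close>

lemma is_cardinal_not_lepoll_below:
  assumes "is_cardinal k" "\<beta> < k" "X \<lesssim> {..<\<beta>}"
  shows "\<not> {..<k} \<lesssim> X"
proof
  assume "{..<k} \<lesssim> X"
  then have "{..<k} \<lesssim> {..<\<beta>}" using assms(3) lepoll_trans by blast
  moreover have "{..<\<beta>} \<lesssim> {..<k}" using assms(2) by (intro subset_imp_lepoll) auto
  ultimately have "{..<\<beta>} \<approx> {..<k}" by (simp add: lepoll_antisym)
  then show False using assms(1,2) unfolding is_cardinal_def by blast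
qed

lemma lepoll_imp_unbounded_in:
  assumes "is_cardinal k" "{..<k} \<lesssim> X"
  shows "unbounded_in X k"
proof (rule ccontr)
  assume "\<not> unbounded_in X k"
  then obtain \<gamma> where "\<gamma> < k" "X \<subseteq> {..<\<gamma>}"
    unfolding unbounded_in_def by (auto simp: not_le)
  then show False
    using is_cardinal_not_lepoll_below[OF assms(1)] assms(2) subset_imp_lepoll by blast
qed

lemma eqpoll_imp_unbounded_in: "is_cardinal k \<Longrightarrow> X \<approx> {..<k} \<Longrightarrow> unbounded_in X k"
  using lepoll_imp_unbounded_in eqpoll_sym eqpoll_imp_lepoll by blast

lemma infinite_cardinal_limit:
  assumes "is_cardinal k" "infinite {..<k}" "x < k"
  obtains y where "x < y" "y < k"
proof -
  have "\<exists>y. x < y \<and> y < k"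
  proof (rule ccontr)
    assume "\<nexists>y. x < y \<and> y < k"
    then have eq: "{..<k} = insert x {..<x}"
      using assms(3) by (auto simp: not_less) (meson antisym_conv1 le_less_trans not_le)
    then have "infinite {..<x}" using assms(2) by auto
    then have "{..<x} \<approx> {..<k}"
      unfolding eq by (simp add: eqpoll_sym infinite_insert_eqpoll)
    then show False using assms(1,3) unfolding is_cardinal_def by blast
  qed
  then show ?thesis using that by blast
qed

lemma regular_cardinal_limit:
  assumes "regular_cardinal k" "x < k"
  obtains y where "x < y" "y < k"
  using infinite_cardinal_limit assms unfolding regular_cardinal_def by blast

lemma regular_cardinal_nonzero:
  assumes "regular_cardinal k"
  obtains x where "x < k"
proof -
  have "{..<k} \<noteq> {}" using assms unfolding regular_cardinal_def by auto
  then show ?thesis using that by blast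
qed

lemma regular_cardinal_bounded:
  assumes "regular_cardinal k" "X \<subseteq> {..<k}" "\<not> {..<k} \<lesssim> X"
  obtains \<beta> where "\<beta> < k" "\<forall>x\<in>X. x < \<beta>"
proof (cases "unbounded_in X k")
  case True
  then have "X \<approx> {..<k}" using assms(1,2) unfolding regular_cardinal_def by blast
  then show ?thesis using assms(3) eqpoll_sym eqpoll_imp_lepoll by blast
next
  case False
  then show ?thesis using that unfolding unbounded_in_def by (auto simp: not_le)
qed

lemma regular_cardinal_bounded_image:
  assumes "regular_cardinal k" "\<beta> < k" "S \<subseteq> {..<\<beta>}" "\<forall>x\<in>S. f x < k"
  obtains \<gamma> where "\<gamma> < k" "\<forall>x\<in>S. f x < \<gamma>"
proof -
  have "f ` S \<lesssim> {..<\<beta>}"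
    using assms(3) image_lepoll lepoll_trans subset_imp_lepoll by blast
  then have "\<not> {..<k} \<lesssim> f ` S"
    using assms(1,2) is_cardinal_not_lepoll_below regular_cardinal_def by blast
  moreover have "f ` S \<subseteq> {..<k}" using assms(4) by blast
  ultimately obtain \<gamma> where "\<gamma> < k" "\<forall>y\<in>f ` S. y < \<gamma>"
    using regular_cardinal_bounded[OF assms(1)] by blast
  then show ?thesis using that by blast
qed

lemma regular_cardinal_bounded_countable:
  assumes "regular_cardinal k" "uncountable {..<k}" "X \<subseteq> {..<k}" "countable X"
  obtains \<beta> where "\<beta> < k" "\<forall>x\<in>X. x < \<beta>"
  using regular_cardinal_bounded[OF assms(1,3)] countable_lepoll assms(2,4) by blast

lemma regular_cardinal_pigeonhole:
  assumes reg: "regular_cardinal k" and "d < k" and H: "H \<subseteq> {..<k}" "unbounded_in H k"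
    and below: "\<And>i. i \<in> H \<Longrightarrow> x i < d"
  obtains v where "v < d" "unbounded_in {i\<in>H. x i = v} k"
proof -
  have "\<exists>v<d. unbounded_in {i\<in>H. x i = v} k"
  proof (rule ccontr)
    assume "\<not> (\<exists>v<d. unbounded_in {i\<in>H. x i = v} k)"
    then have "\<forall>v. \<exists>b. v < d \<longrightarrow> b < k \<and> (\<forall>i\<in>H. x i = v \<longrightarrow> i < b)"
      unfolding unbounded_in_def by (simp add: not_le) blast
    then obtain b where b: "\<And>v. v < d \<Longrightarrow> b v < k \<and> (\<forall>i\<in>H. x i = v \<longrightarrow> i < b v)"
      by metis
    have "\<forall>v\<in>{..<d}. b v < k" using b by blast
    then obtain B where "B < k" and B: "\<forall>v\<in>{..<d}. b v < B"
      by (rule regular_cardinal_bounded_image[OF reg \<open>d < k\<close> subset_refl])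
    then obtain i where "i \<in> H" "B \<le> i" using H(2) unfolding unbounded_in_def by blast
    moreover have "x i < d" using below \<open>i \<in> H\<close> .
    ultimately have "i < b (x i)" "b (x i) < B" using b B by auto
    with \<open>B \<le> i\<close> show False by (metis leD order.strict_trans)
  qed
  then show ?thesis using that by blast
qed

lemma weakly_compact_homogeneous:
  fixes c :: "'o::wellorder \<Rightarrow> 'o \<Rightarrow> bool"
  assumes "weakly_compact k"
  obtains H i where "H \<subseteq> {..<k}" "H \<approx> {..<k}" "\<forall>x\<in>H. \<forall>y\<in>H. x < y \<longrightarrow> c x y = i"
proof -
  have "\<forall>c::'o \<Rightarrow> 'o \<Rightarrow> bool. \<exists>H\<subseteq>{..<k}. \<exists>i. H \<approx> {..<k} \<and>
      (\<forall>x\<in>H. \<forall>y\<in>H. x < y \<longrightarrow> c x y = i)"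
    using assms unfolding weakly_compact_def by (elim conjE)
  then obtain H i where "H \<subseteq> {..<k}" "H \<approx> {..<k}" "\<forall>x\<in>H. \<forall>y\<in>H. x < y \<longrightarrow> c x y = i"
    by (elim allE[where x = c] exE conjE)
  then show ?thesis by (rule that)
qed

lemma lepoll_if_separates:
  fixes X :: "'o::wellorder set"
  assumes H: "H \<approx> {..<k}" and X: "\<forall>h\<in>H. \<exists>z\<in>X. h \<le> z"
    and separates: "\<forall>h\<in>H. \<forall>h'\<in>H. h < h' \<longrightarrow> (\<exists>z\<in>X. h \<le> z \<and> z < h')"
  shows "{..<k} \<lesssim> X"
proof -
  define m where "m h = (LEAST z. z \<in> X \<and> h \<le> z)" for h
  have m: "m h \<in> X \<and> h \<le> m h" if "h \<in> H" for h
  proof -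
    have "\<exists>z. z \<in> X \<and> h \<le> z" using X that by blast
    then show ?thesis unfolding m_def by (rule LeastI_ex)
  qed
  have "m h < m h'" if hh: "h \<in> H" "h' \<in> H" "h < h'" for h h'
  proof -
    obtain z where z: "z \<in> X" "h \<le> z" "z < h'" using separates hh by blast
    then have "m h \<le> z" unfolding m_def by (intro Least_le) auto
    also have "z < h'" by fact
    also have "h' \<le> m h'" using m hh by blast
    finally show ?thesis .
  qed
  then have "inj_on m H" by (intro linorder_inj_onI') (metis less_irrefl)
  then have "H \<lesssim> X" using m unfolding lepoll_def by blast
  then show ?thesis using H eqpoll_sym lepoll_trans1 by blast
qed

text \<open>Colour x < y by whether X meets [x, y).\<close>
lemma weakly_compact_regular:
  assumes wc: "weakly_compact k"
  shows "regular_cardinal k"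
proof -
  have card: "is_cardinal k" and inf: "infinite {..<k}"
    using wc countable_finite by (auto simp: weakly_compact_def)
  have "X \<approx> {..<k}" if X: "X \<subseteq> {..<k}" "unbounded_in X k" for X
  proof -
    obtain H i where H: "H \<subseteq> {..<k}" "H \<approx> {..<k}"
      and hom: "\<forall>x\<in>H. \<forall>y\<in>H. x < y \<longrightarrow> (\<exists>z\<in>X. x \<le> z \<and> z < y) = i"
      by (rule weakly_compact_homogeneous[OF wc])
    have Hu: "unbounded_in H k" using card H(2) by (rule eqpoll_imp_unbounded_in)
    show ?thesis
    proof (cases i)
      case True
      have "\<forall>h\<in>H. \<exists>z\<in>X. h \<le> z" using X(2) H(1) unfolding unbounded_in_def by blast
      with H(2) have "{..<k} \<lesssim> X" by (rule lepoll_if_separates) (use hom True in simp)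
      then show ?thesis using X(1) by (simp add: lepoll_antisym subset_imp_lepoll)
    next
      case False
      have "{..<k} \<noteq> {}" using inf by auto
      then obtain x where "x < k" by blast
      then obtain h0 where "h0 \<in> H" using Hu unfolding unbounded_in_def by blast
      then obtain z where z: "z \<in> X" "h0 \<le> z" using X H(1) unfolding unbounded_in_def by blast
      have "z < k" using X(1) z by blast
      then obtain y where "z < y" "y < k" by (rule infinite_cardinal_limit[OF card inf])
      then obtain h where "h \<in> H" "y \<le> h" using Hu unfolding unbounded_in_def by blast
      then have "z < h" using \<open>z < y\<close> by simp
      then have "h0 < h" and "\<exists>z\<in>X. h0 \<le> z \<and> z < h" using z by auto
      then show ?thesis using hom[rule_format, OF \<open>h0 \<in> H\<close> \<open>h \<in> H\<close>] False by simp
    qed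
  qed
  then show ?thesis using card inf unfolding regular_cardinal_def by blast
qed

definition limit_point :: "'o::wellorder set \<Rightarrow> 'o \<Rightarrow> bool" where
  "limit_point X \<beta> \<longleftrightarrow> (\<exists>x\<in>X. x < \<beta>) \<and> (\<forall>\<gamma><\<beta>. \<exists>x\<in>X. \<gamma> < x \<and> x < \<beta>)"

lemma club_iff:
  "club C k \<longleftrightarrow> C \<subseteq> {..<k} \<and> unbounded_in C k \<and> (\<forall>\<beta><k. limit_point C \<beta> \<longrightarrow> \<beta> \<in> C)"
  unfolding club_def limit_point_def ..

lemma limit_point_of_limit_points:
  assumes "limit_point D \<beta>" "\<And>\<delta>. \<delta> \<in> D \<Longrightarrow> limit_point X \<delta>"
  shows "limit_point X \<beta>"
  using assms unfolding limit_point_def by (meson order.strict_trans)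

lemma limit_point_Least_upper_bound:
  assumes "\<And>n. s n \<in> X" "\<And>n. s n < s (Suc n)" "\<forall>n. s n < \<delta>"
  shows "limit_point X (LEAST \<beta>. \<forall>n. s n < \<beta>)" (is "limit_point X ?\<beta>")
proof -
  have below: "s n < ?\<beta>" for n using LeastI[of "\<lambda>\<beta>. \<forall>n. s n < \<beta>", OF assms(3)] by blast
  have "\<exists>x\<in>X. \<gamma> < x \<and> x < ?\<beta>" if \<gamma>: "\<gamma> < ?\<beta>" for \<gamma>
  proof -
    obtain n where "\<gamma> \<le> s n" using not_less_Least[OF \<gamma>] by (auto simp: not_less)
    then show ?thesis using assms(1,2) below by (meson order_le_less_trans)
  qed
  then show ?thesis unfolding limit_point_def using assms(1) below by blast
qed

lemma unbounded_limit_points: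
  assumes reg: "regular_cardinal k" and unc: "uncountable {..<k}"
    and X: "X \<subseteq> {..<k}" "unbounded_in X k"
  shows "unbounded_in {\<beta>. \<beta> < k \<and> limit_point X \<beta>} k"
  unfolding unbounded_in_def
proof (intro allI impI)
  fix \<gamma> assume "\<gamma> < k"
  have "\<exists>y. y \<in> X \<and> x < y" if "x < k" for x
  proof -
    obtain y' where "x < y'" "y' < k" using regular_cardinal_limit[OF reg \<open>x < k\<close>] .
    then show ?thesis using X(2) unfolding unbounded_in_def by (meson order_less_le_trans)
  qed
  then obtain next_in where next_in: "\<And>x. x < k \<Longrightarrow> next_in x \<in> X \<and> x < next_in x"
    by metis
  define s where "s n = (next_in ^^ Suc n) \<gamma>" for n
  have sX: "s n \<in> X" for n
    by (induction n) (use next_in X(1) \<open>\<gamma> < k\<close> in \<open>auto simp: s_def\<close>)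
  have s_Suc: "s n < s (Suc n)" for n
    using next_in[of "s n"] sX[of n] X(1) by (auto simp: s_def)
  have "range s \<subseteq> {..<k}" using sX X(1) by blast
  moreover have "countable (range s)" by simp
  ultimately obtain \<delta> where "\<delta> < k" and "\<forall>x\<in>range s. x < \<delta>"
    by (rule regular_cardinal_bounded_countable[OF reg unc])
  then have \<delta>: "\<forall>n. s n < \<delta>" by simp
  define \<beta> where "\<beta> = (LEAST \<beta>. \<forall>n. s n < \<beta>)"
  have "limit_point X \<beta>" unfolding \<beta>_def using sX s_Suc \<delta> by (rule limit_point_Least_upper_bound)
  moreover have "\<beta> < k"
  proof -
    have "\<beta> \<le> \<delta>" unfolding \<beta>_def using \<delta> by (rule Least_le)
    then show ?thesis using \<open>\<delta> < k\<close> by simp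
  qed
  moreover have "\<gamma> \<le> \<beta>"
  proof -
    have "\<gamma> < s 0" using next_in[OF \<open>\<gamma> < k\<close>] by (simp add: s_def)
    also have "s 0 < \<beta>" unfolding \<beta>_def using LeastI[of "\<lambda>\<beta>. \<forall>n. s n < \<beta>", OF \<delta>] by blast
    finally show ?thesis by simp
  qed
  ultimately show "\<exists>x\<in>{\<beta>. \<beta> < k \<and> limit_point X \<beta>}. \<gamma> \<le> x" by blast
qed

lemma club_limit_points:
  assumes "regular_cardinal k" "uncountable {..<k}" "X \<subseteq> {..<k}" "unbounded_in X k"
  shows "club {\<beta>. \<beta> < k \<and> limit_point X \<beta>} k"
  unfolding club_iff
  using unbounded_limit_points[OF assms] limit_point_of_limit_points by blast

lemma club_bounded_below_regular_nonmember:
  assumes C: "club C k" and d: "regular_cardinal d" "d < k" "d \<notin> C"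
  obtains \<gamma> where "\<gamma> < d" "\<forall>c\<in>C. c < d \<longrightarrow> c < \<gamma>"
proof -
  have "\<exists>\<gamma><d. \<forall>c\<in>C. c < d \<longrightarrow> c < \<gamma>"
  proof (rule ccontr)
    assume "\<not> (\<exists>\<gamma><d. \<forall>c\<in>C. c < d \<longrightarrow> c < \<gamma>)"
    then have cofinal: "\<forall>\<gamma><d. \<exists>c\<in>C. \<gamma> \<le> c \<and> c < d" by (meson not_less)
    have "\<exists>c\<in>C. \<gamma> < c \<and> c < d" if lt: "\<gamma> < d" for \<gamma>
    proof -
      obtain y where "\<gamma> < y" "y < d" using regular_cardinal_limit[OF d(1) lt] .
      then show ?thesis using cofinal by (meson order_less_le_trans)
    qed
    moreover obtain x where "x < d" using d(1) by (rule regular_cardinal_nonzero)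
    ultimately have "limit_point C d" unfolding limit_point_def by blast
    then show False using C d(2,3) unfolding club_iff by blast
  qed
  then show ?thesis using that by blast
qed

lemma bounded_below_regular_nonmember:
  assumes C: "club C k" and d: "regular_cardinal d" "d < k" "d \<notin> C"
    and below: "\<forall>c\<in>C. x c < d" and settled: "\<forall>c\<in>C. d < c \<longrightarrow> x c = v" and "v < d"
  obtains y where "y < d" "\<forall>c\<in>C. x c < y"
proof -
  obtain \<gamma> where "\<gamma> < d" and \<gamma>: "\<forall>c\<in>C. c < d \<longrightarrow> c < \<gamma>"
    by (rule club_bounded_below_regular_nonmember[OF C d])
  have "C \<inter> {..<\<gamma>} \<subseteq> {..<\<gamma>}" and "\<forall>c\<in>C \<inter> {..<\<gamma>}. x c < d" using below by auto
  then obtain y1 where "y1 < d" and y1: "\<forall>c\<in>C \<inter> {..<\<gamma>}. x c < y1"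
    by (rule regular_cardinal_bounded_image[OF d(1) \<open>\<gamma> < d\<close>])
  have "max y1 v < d" using \<open>y1 < d\<close> \<open>v < d\<close> by simp
  then obtain y where y: "max y1 v < y" "y < d" by (rule regular_cardinal_limit[OF d(1)])
  have "x c < y" if c: "c \<in> C" for c
  proof (cases "c < d")
    case True
    then have "c < \<gamma>" using \<gamma> c by blast
    then have "x c < y1" using y1 c by blast
    then show ?thesis using y(1) by (metis max_less_iff_conj order.strict_trans)
  next
    case False
    then have "d < c" using d(3) c by (metis linorder_neqE)
    then show ?thesis using settled c y(1) by (metis max_less_iff_conj)
  qed
  then show ?thesis using that y(2) by blast
qed

lemma prodA_less: "f \<in> prodA A \<Longrightarrow> a \<in> A \<Longrightarrow> f a < a"
  unfolding prodA_def by auto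

lemma bounded_prodI:
  assumes "\<forall>a\<in>A. \<exists>y. y < a \<and> (\<forall>f\<in>G. f a < y)"
  shows "bounded_prod A G"
proof -
  from bchoice[OF assms] obtain y where y: "\<forall>a\<in>A. y a < a \<and> (\<forall>f\<in>G. f a < y a)" by blast
  have "restrict y A \<in> prodA A" using y unfolding prodA_def by auto
  moreover have "\<forall>f\<in>G. \<forall>a\<in>A. f a < restrict y A a" using y by auto
  ultimately show ?thesis unfolding bounded_prod_def by blast
qed

lemma unbounded_in_above_small_image:
  assumes "regular_cardinal k" "unbounded_in H k" "c < k" "\<forall>d\<in>D \<inter> {..<c}. f d < k"
  obtains j where "j \<in> H" "c \<le> j" "\<forall>d\<in>D \<inter> {..<c}. f d \<le> j"
proof -
  have "D \<inter> {..<c} \<subseteq> {..<c}" by blast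
  then obtain B where "B < k" and B: "\<forall>d\<in>D \<inter> {..<c}. f d < B"
    using assms(4) by (rule regular_cardinal_bounded_image[OF assms(1,3)])
  have "max c B < k" using \<open>B < k\<close> assms(3) by simp
  then obtain j where "j \<in> H" "max c B \<le> j" using assms(2) unfolding unbounded_in_def by blast
  moreover have "\<forall>d\<in>D \<inter> {..<c}. f d \<le> j"
    using B \<open>max c B \<le> j\<close> by (meson less_imp_le less_le_trans max.bounded_iff)
  ultimately show ?thesis using that by simp
qed

definition lex_less :: "'o::wellorder set \<Rightarrow> ('o \<Rightarrow> 'o) \<Rightarrow> ('o \<Rightarrow> 'o) \<Rightarrow> bool" where
  "lex_less A f g \<longleftrightarrow> (\<exists>d\<in>A. f d < g d \<and> (\<forall>e\<in>A. e < d \<longrightarrow> f e = g e))"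

lemma lex_less_iff_first_difference:
  assumes "d \<in> A" "f d \<noteq> g d" "\<forall>e\<in>A. e < d \<longrightarrow> f e = g e"
  shows "lex_less A f g \<longleftrightarrow> f d < g d"
proof
  assume "lex_less A f g"
  then obtain d' where d': "d' \<in> A" "f d' < g d'" "\<forall>e\<in>A. e < d' \<longrightarrow> f e = g e"
    unfolding lex_less_def by blast
  then show "f d < g d" using assms by (metis less_irrefl linorder_neqE)
next
  assume "f d < g d"
  then show "lex_less A f g" unfolding lex_less_def using assms by blast
qed

lemma eventually_constant_if_monotone:
  assumes reg: "regular_cardinal k" and "d < k" and H: "H \<subseteq> {..<k}" "unbounded_in H k"
    and below: "\<And>i. i \<in> H \<Longrightarrow> x i < d" and "i0 < k"
    and mono: "\<And>i j. i \<in> H \<Longrightarrow> j \<in> H \<Longrightarrow> i0 \<le> i \<Longrightarrow> i \<le> j \<Longrightarrow> R (x i) (x j)"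
    and antisym: "\<And>u v. R u v \<Longrightarrow> R v u \<Longrightarrow> u = v"
  shows "\<exists>p<k. \<exists>v. \<forall>i\<in>H. p \<le> i \<longrightarrow> x i = v"
proof -
  obtain v where often: "unbounded_in {i\<in>H. x i = v} k"
    using regular_cardinal_pigeonhole[where x = x, OF reg \<open>d < k\<close> H below] by blast
  then obtain p where p: "p \<in> H" "x p = v" "i0 \<le> p"
    using \<open>i0 < k\<close> unfolding unbounded_in_def by blast
  have "x i = v" if i: "i \<in> H" "p \<le> i" for i
  proof (rule antisym)
    show "R v (x i)" using mono[OF p(1) i(1) p(3) i(2)] p(2) by simp
    obtain p' where "p' \<in> H" "x p' = v" "i \<le> p'"
      using often H(1) i(1) unfolding unbounded_in_def by blast
    then show "R (x i) v" using mono[OF i(1)] p(3) i(2) by fastforce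
  qed
  then show ?thesis using p(1) H(1) by blast
qed

text \<open>Once all coordinates below d agree, the lexicographic colour is decided at d, so
  homogeneity makes coordinate d monotone (increasing or decreasing, by the colour).\<close>
lemma lex_homogeneous_coordinates_stabilize:
  fixes \<phi> :: "'o::wellorder \<Rightarrow> 'o \<Rightarrow> 'o"
  assumes reg: "regular_cardinal k" and A: "A \<subseteq> {..<k}"
    and H: "H \<subseteq> {..<k}" "unbounded_in H k"
    and below: "\<And>i d. i \<in> H \<Longrightarrow> d \<in> A \<Longrightarrow> \<phi> i d < d"
    and hom: "\<And>i j. i \<in> H \<Longrightarrow> j \<in> H \<Longrightarrow> i < j \<Longrightarrow> lex_less A (\<phi> i) (\<phi> j) = col"
    and "d \<in> A"
  shows "\<exists>i0<k. \<exists>v. \<forall>i\<in>H. i0 \<le> i \<longrightarrow> \<phi> i d = v"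
  using \<open>d \<in> A\<close>
proof (induction d rule: less_induct)
  case (less d)
  then have "d < k" using A by blast
  obtain I where I: "\<And>e. e \<in> A \<inter> {..<d} \<Longrightarrow> I e < k \<and> (\<exists>v. \<forall>i\<in>H. I e \<le> i \<longrightarrow> \<phi> i e = v)"
    using less.IH by (metis IntE lessThan_iff)
  have "A \<inter> {..<d} \<subseteq> {..<d}" and "\<forall>e\<in>A \<inter> {..<d}. I e < k" using I by auto
  then obtain i0 where "i0 < k" and i0: "\<forall>e\<in>A \<inter> {..<d}. I e < i0"
    by (rule regular_cardinal_bounded_image[OF reg \<open>d < k\<close>])
  have agree: "\<phi> i e = \<phi> j e"
    if ij: "i \<in> H" "j \<in> H" "i0 \<le> i" "i0 \<le> j" and e: "e \<in> A" "e < d" for i j e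
  proof -
    obtain v where "\<forall>i\<in>H. I e \<le> i \<longrightarrow> \<phi> i e = v" using I e by blast
    moreover have "I e < i0" using i0 e by blast
    then have "I e \<le> i" "I e \<le> j" using ij(3,4) by (meson less_imp_le less_le_trans)+
    ultimately show ?thesis using ij(1,2) by simp
  qed
  let ?R = "\<lambda>u v :: 'o. if col then u \<le> v else v \<le> u"
  have mono: "?R (\<phi> i d) (\<phi> j d)" if "i \<in> H" "j \<in> H" "i0 \<le> i" "i \<le> j" for i j
  proof (cases "\<phi> i d = \<phi> j d")
    case False
    then have "i < j" using that(4) by (metis order.not_eq_order_implies_strict)
    then have "lex_less A (\<phi> i) (\<phi> j) = col" by (rule hom[OF that(1,2)])
    moreover have "\<forall>e\<in>A. e < d \<longrightarrow> \<phi> i e = \<phi> j e" using agree that by (meson order.trans)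
    then have "lex_less A (\<phi> i) (\<phi> j) \<longleftrightarrow> \<phi> i d < \<phi> j d"
      by (rule lex_less_iff_first_difference[where f = "\<phi> i" and g = "\<phi> j",
            OF less.prems False])
    ultimately have "col \<longleftrightarrow> \<phi> i d < \<phi> j d" by simp
    then show ?thesis using False by auto
  qed simp
  have R_antisym: "\<And>u v. ?R u v \<Longrightarrow> ?R v u \<Longrightarrow> u = v" by (cases col) auto
  have "\<phi> i d < d" if "i \<in> H" for i using below that less.prems .
  then show ?case
    by (rule eventually_constant_if_monotone[where x = "\<lambda>i. \<phi> i d" and R = ?R,
          OF reg \<open>d < k\<close> H _ \<open>i0 < k\<close> mono R_antisym])
qed

lemma stabilizing_family_has_bounded_subfamily:
  assumes reg: "regular_cardinal k" and A: "A \<subseteq> {..<k}" "\<forall>a\<in>A. regular_cardinal a"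
    and C: "club C k" "A \<inter> C = {}"
    and H: "H \<subseteq> {..<k}" "unbounded_in H k"
    and below: "\<And>i d. i \<in> H \<Longrightarrow> d \<in> A \<Longrightarrow> \<phi> i d < d"
    and stab: "\<And>d. d \<in> A \<Longrightarrow> \<exists>i0<k. \<exists>v. \<forall>i\<in>H. i0 \<le> i \<longrightarrow> \<phi> i d = v"
  obtains J where "J \<subseteq> H" "unbounded_in J k" "bounded_prod A (\<phi> ` J)"
proof -
  have "\<forall>d\<in>A. \<exists>i0. i0 < k \<and> (\<exists>v. \<forall>i\<in>H. i0 \<le> i \<longrightarrow> \<phi> i d = v)" using stab by blast
  from bchoice[OF this] obtain I
    where I: "\<forall>d\<in>A. I d < k \<and> (\<exists>v. \<forall>i\<in>H. I d \<le> i \<longrightarrow> \<phi> i d = v)"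
    by blast
  then have "\<forall>d\<in>A. \<exists>v. \<forall>i\<in>H. I d \<le> i \<longrightarrow> \<phi> i d = v" by blast
  from bchoice[OF this] obtain V where V: "\<forall>d\<in>A. \<forall>i\<in>H. I d \<le> i \<longrightarrow> \<phi> i d = V d"
    by blast
  have Vd: "V d < d" if d: "d \<in> A" for d
  proof -
    obtain i where "i \<in> H" "I d \<le> i" using H(2) I d unfolding unbounded_in_def by blast
    then show ?thesis using V below d by metis
  qed
  have Ck: "C \<subseteq> {..<k}" and Cu: "unbounded_in C k" using C(1) unfolding club_def by auto
  have "\<forall>c\<in>C. \<exists>j. j \<in> H \<and> c \<le> j \<and> (\<forall>d\<in>A \<inter> {..<c}. I d \<le> j)"
  proof
    fix c assume "c \<in> C"
    then have "c < k" using Ck by blast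
    moreover have "\<forall>d\<in>A \<inter> {..<c}. I d < k" using I by blast
    ultimately show "\<exists>j. j \<in> H \<and> c \<le> j \<and> (\<forall>d\<in>A \<inter> {..<c}. I d \<le> j)"
      using unbounded_in_above_small_image[OF reg H(2)] by metis
  qed
  from bchoice[OF this] obtain pick
    where pick: "\<forall>c\<in>C. pick c \<in> H \<and> c \<le> pick c \<and> (\<forall>d\<in>A \<inter> {..<c}. I d \<le> pick c)"
    by blast
  have "unbounded_in (pick ` C) k"
    using Cu pick unfolding unbounded_in_def by (meson image_eqI order.trans)
  moreover have "bounded_prod A (\<phi> ` pick ` C)"
  proof (rule bounded_prodI, intro ballI)
    fix d assume d: "d \<in> A"
    have "regular_cardinal d" "d < k" "d \<notin> C" using A C(2) d by auto
    moreover have "\<forall>c\<in>C. \<phi> (pick c) d < d" using below pick d by blast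
    moreover have "\<forall>c\<in>C. d < c \<longrightarrow> \<phi> (pick c) d = V d" using V pick d by blast
    moreover have "V d < d" using Vd d .
    ultimately obtain y where "y < d" "\<forall>c\<in>C. \<phi> (pick c) d < y"
      by (rule bounded_below_regular_nonmember[OF C(1)])
    then show "\<exists>y. y < d \<and> (\<forall>f\<in>\<phi> ` pick ` C. f d < y)" by blast
  qed
  ultimately show ?thesis using that pick by blast
qed

lemma nonstationary_imp_not_in_spec:
  assumes wc: "weakly_compact k" and A: "A \<subseteq> {..<k}" "\<forall>a\<in>A. regular_cardinal a"
    and ns: "\<not> stationary A k"
  shows "\<not> in_spec A k"
proof
  assume "in_spec A k"
  then obtain F where F: "F \<subseteq> prodA A" "F \<approx> {..<k}"
    and unbounded: "\<And>G. G \<subseteq> F \<Longrightarrow> G \<approx> {..<k} \<Longrightarrow> \<not> bounded_prod A G"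
    unfolding in_spec_def by blast
  have reg: "regular_cardinal k" using wc by (rule weakly_compact_regular)
  obtain C where C: "club C k" "A \<inter> C = {}" using ns A(1) unfolding stationary_def by blast
  obtain \<phi> where \<phi>: "bij_betw \<phi> {..<k} F" using F(2) eqpoll_sym unfolding eqpoll_def by blast
  obtain H col where H: "H \<subseteq> {..<k}" "H \<approx> {..<k}"
    and hom: "\<forall>i\<in>H. \<forall>j\<in>H. i < j \<longrightarrow> lex_less A (\<phi> i) (\<phi> j) = col"
    by (rule weakly_compact_homogeneous[OF wc])
  have Hu: "unbounded_in H k" using H(2) reg eqpoll_imp_unbounded_in regular_cardinal_def by blast
  have below: "\<phi> i d < d" if "i \<in> H" "d \<in> A" for i d
  proof -
    have "\<phi> i \<in> F" using bij_betwE[OF \<phi>] H(1) that(1) by blast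
    then show ?thesis using F(1) prodA_less that(2) by blast
  qed
  obtain J where J: "J \<subseteq> H" "unbounded_in J k" "bounded_prod A (\<phi> ` J)"
    by (rule stabilizing_family_has_bounded_subfamily[OF reg A C H(1) Hu below
        lex_homogeneous_coordinates_stabilize[OF reg A(1) H(1) Hu below hom[rule_format]]])
  have "J \<subseteq> {..<k}" using J(1) H(1) by blast
  then have "J \<approx> {..<k}" using reg J(2) unfolding regular_cardinal_def by blast
  moreover have "inj_on \<phi> J" using bij_betw_imp_inj_on[OF \<phi>] \<open>J \<subseteq> {..<k}\<close> by (rule inj_on_subset)
  ultimately have "\<phi> ` J \<approx> {..<k}" using eqpoll_trans inj_on_image_eqpoll_self by blast
  moreover have "\<phi> ` J \<subseteq> F" using bij_betw_imp_surj_on[OF \<phi>] \<open>J \<subseteq> {..<k}\<close> by blast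
  ultimately show False using unbounded J(3) by blast
qed

definition const_above :: "'o::wellorder set \<Rightarrow> 'o \<Rightarrow> 'o \<Rightarrow> 'o" where
  "const_above A \<alpha> = restrict (\<lambda>a. if \<alpha> < a then \<alpha> else (LEAST x. True)) A"

lemma const_above_eq: "a \<in> A \<Longrightarrow> \<alpha> < a \<Longrightarrow> const_above A \<alpha> a = \<alpha>"
  by (simp add: const_above_def)

lemma const_above_in_prodA:
  assumes "\<forall>a\<in>A. regular_cardinal a"
  shows "const_above A \<alpha> \<in> prodA A"
proof -
  have "(LEAST x. True) < a" if "a \<in> A" for a
    using regular_cardinal_nonzero assms that by (metis Least_le le_less_trans)
  then show ?thesis unfolding prodA_def const_above_def by auto
qed

lemma inj_on_const_above:
  assumes "regular_cardinal k" "unbounded_in A k"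
  shows "inj_on (const_above A) {..<k}"
proof (rule linorder_inj_onI')
  fix \<alpha> \<beta> assume "\<alpha> \<in> {..<k}" "\<beta> \<in> {..<k}" "\<alpha> < \<beta>"
  then obtain y where "\<beta> < y" "y < k" using regular_cardinal_limit[OF assms(1)] by blast
  then obtain a where "a \<in> A" "\<beta> < a"
    using assms(2) unfolding unbounded_in_def by (meson order_less_le_trans)
  then show "const_above A \<alpha> \<noteq> const_above A \<beta>"
    using \<open>\<alpha> < \<beta>\<close> const_above_eq by (metis less_irrefl order.strict_trans)
qed

lemma stationary_imp_in_spec:
  assumes reg: "regular_cardinal k" and unc: "uncountable {..<k}"
    and A: "\<forall>a\<in>A. regular_cardinal a" "unbounded_in A k" and st: "stationary A k"
  shows "in_spec A k"
proof -
  have inj: "inj_on (const_above A) {..<k}" using reg A(2) by (rule inj_on_const_above)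
  let ?F = "const_above A ` {..<k}"
  have "\<not> bounded_prod A G" if G: "G \<subseteq> ?F" "G \<approx> {..<k}" for G
  proof
    assume "bounded_prod A G"
    then obtain g where g: "g \<in> prodA A" "\<And>f a. f \<in> G \<Longrightarrow> a \<in> A \<Longrightarrow> f a < g a"
      unfolding bounded_prod_def by blast
    define I where "I = {\<alpha>\<in>{..<k}. const_above A \<alpha> \<in> G}"
    have "G = const_above A ` I" using G(1) unfolding I_def by auto
    moreover have "inj_on (const_above A) I" using inj unfolding I_def by (rule inj_on_subset) auto
    ultimately have "I \<approx> {..<k}"
      using G(2) eqpoll_trans eqpoll_sym inj_on_image_eqpoll_self by metis
    then have "unbounded_in I k" using reg eqpoll_imp_unbounded_in regular_cardinal_def by blast
    moreover have "I \<subseteq> {..<k}" unfolding I_def by blast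
    ultimately have "club {\<beta>. \<beta> < k \<and> limit_point I \<beta>} k"
      using club_limit_points[OF reg unc] by blast
    then obtain a where a: "a \<in> A" "limit_point I a" using st unfolding stationary_def by blast
    then obtain \<alpha> where "\<alpha> \<in> I" "g a < \<alpha>" "\<alpha> < a"
      using prodA_less[OF g(1)] unfolding limit_point_def by blast
    then have "const_above A \<alpha> a < g a" using g(2) a(1) unfolding I_def by blast
    then show False using const_above_eq[OF a(1) \<open>\<alpha> < a\<close>] \<open>g a < \<alpha>\<close> by simp
  qed
  moreover have "?F \<subseteq> prodA A" using const_above_in_prodA[OF A(1)] by blast
  moreover have "?F \<approx> {..<k}" using inj by (rule inj_on_image_eqpoll_self)
  ultimately show ?thesis unfolding in_spec_def using reg by blast
qed

theorem theorem4p2: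
  fixes \<kappa> :: "'o::wellorder"
  assumes "weakly_compact \<kappa>"
  shows "(\<forall>A. A \<subseteq> {..<\<kappa>} \<and> (\<forall>a\<in>A. regular_cardinal a) \<and> unbounded_in A \<kappa>
              \<and> \<not> stationary A \<kappa> \<longrightarrow> \<not> in_spec A \<kappa>)
       \<and> (\<forall>A. A \<subseteq> {..<\<kappa>} \<and> (\<forall>a\<in>A. regular_cardinal a) \<and> unbounded_in A \<kappa>
              \<longrightarrow> (in_spec A \<kappa> \<longleftrightarrow> stationary A \<kappa>))"
proof -
  have reg: "regular_cardinal \<kappa>" using assms by (rule weakly_compact_regular)
  have unc: "uncountable {..<\<kappa>}" using assms unfolding weakly_compact_def by blast
  have "\<not> in_spec A \<kappa>" if "A \<subseteq> {..<\<kappa>}" "\<forall>a\<in>A. regular_cardinal a" "\<not> stationary A \<kappa>" for A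
    using nonstationary_imp_not_in_spec[OF assms] that .
  moreover have "in_spec A \<kappa>" if "\<forall>a\<in>A. regular_cardinal a" "unbounded_in A \<kappa>" "stationary A \<kappa>" for A
    using stationary_imp_in_spec[OF reg unc] that .
  ultimately show ?thesis by blast
qed

end
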